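(* Let $A \subseteq B$ be an integral extension of commutative rings, and suppose that $B$ is sublocalizable. Then $A$ is sublocalizable, with unique local subring (its sublocalization) $[1]^{A^\times}_A = [1]^{B^\times}_B \cap A$, which has maximal ideal $J(A) = J(B) \cap A$ and units $A^\times = B^\times \cap A$.
   Context: $A^\times$ is the unit group and $J(A)$ the Jacobson radical. A commutative ring $A$ is sublocalizable if it is nontrivial and $u+v\in A^\times\cup J(A)$ for all $u,v\in A^\times$; its sublocalization is the local subring $A^\times\cup J(A)$. For $T\subseteq A$, $[1]^T_A$ is the smallest additive subgroup $F$ of $A$ containing $1$ such that $ta\in F$ with $t\in T$, $a\in A$ implies $a\in F$; $[1]^{A^\times}_A$ equals the subring of $A$ generated by $A^\times$. *)

theory Defs
  imports "HOL-Algebra.Algebra"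
begin

definition jacobson :: "('a, 'b) ring_scheme \<Rightarrow> 'a set" where
  "jacobson R = carrier R \<inter> \<Inter> {M. maximalideal M R}"

definition sublocalizable :: "('a, 'b) ring_scheme \<Rightarrow> bool" where
  "sublocalizable R \<longleftrightarrow> \<one>\<^bsub>R\<^esub> \<noteq> \<zero>\<^bsub>R\<^esub> \<and>
     (\<forall>u \<in> Units R. \<forall>v \<in> Units R. u \<oplus>\<^bsub>R\<^esub> v \<in> Units R \<union> jacobson R)"

definition sublocalization :: "('a, 'b) ring_scheme \<Rightarrow> 'a set" where
  "sublocalization R = Units R \<union> jacobson R"

text \<open>The set [1]^T_R: smallest additive subgroup F containing 1 such that
  t*a in F with t in T, a in R implies a in F.\<close>
definition one_closure :: "('a, 'b) ring_scheme \<Rightarrow> 'a set \<Rightarrow> 'a set" where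
  "one_closure R T = \<Inter> {F. additive_subgroup F R \<and> \<one>\<^bsub>R\<^esub> \<in> F \<and>
      (\<forall>t \<in> T. \<forall>a \<in> carrier R. t \<otimes>\<^bsub>R\<^esub> a \<in> F \<longrightarrow> a \<in> F)}"

definition local_ring :: "('a, 'b) ring_scheme \<Rightarrow> bool" where
  "local_ring R \<longleftrightarrow> (\<exists>!M. maximalideal M R)"

text \<open>x is integral over the subset K of R: root of a monic polynomial with
  coefficients in K (HOL-Algebra list polynomials, leading coefficient first).\<close>
definition integral_over :: "('a, 'b) ring_scheme \<Rightarrow> 'a set \<Rightarrow> 'a \<Rightarrow> bool" where
  "integral_over R K x \<longleftrightarrow> (\<exists>p. p \<noteq> [] \<and> polynomial\<^bsub>R\<^esub> K p \<and> hd p = \<one>\<^bsub>R\<^esub> \<and> ring.eval R p x = \<zero>\<^bsub>R\<^esub>)"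

end

theory Submission
  imports Defs
begin

text \<open>
  If \<open>a \<in> A\<close> has an inverse \<open>c\<close> in \<open>B\<close> modulo an ideal \<open>I\<close> of \<open>B\<close>, write
  \<open>c\<^sup>n + q(c) = 0\<close> with \<open>q\<close> of degree \<open>< n\<close> over \<open>A\<close>. Multiplying by \<open>a\<^sup>n\<close> and using
  \<open>(ac)\<^sup>k \<equiv> 1\<close> gives \<open>1 + a q\<^sup>*(a) \<in> I\<close>, with \<open>q\<^sup>*\<close> the reversed polynomial; so \<open>a\<close> has an
  inverse modulo \<open>I\<close> inside \<open>A\<close>. For \<open>I = 0\<close> this gives \<open>A\<^sup>\<times> = B\<^sup>\<times> \<inter> A\<close>; for maximal \<open>I\<close>,
  together with \<open>x \<in> J \<longleftrightarrow> 1 + r x \<in> R\<^sup>\<times>\<close> for all \<open>r\<close>, it gives \<open>J(A) = J(B) \<inter> A\<close>.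

  In a sublocalizable ring \<open>R\<close>, \<open>R\<^sup>\<times> \<union> J(R)\<close> is closed under addition (a unit plus an
  element of \<open>J\<close> is a unit) and multiplication, hence a subring; its nonunits form the ideal
  \<open>J(R)\<close>, so it is local. It equals \<open>one_closure R (Units R)\<close>: every admissible \<open>F\<close> contains each
  unit \<open>u\<close>, as \<open>u\<^sup>-\<^sup>1 u = 1 \<in> F\<close>, and each \<open>x \<in> J\<close>, as \<open>1 + x\<close> is a unit.
\<close>

lemma (in maximalideal) Units_notin:
  assumes "u \<in> Units R"
  shows "u \<notin> I"
proof
  assume "u \<in> I"
  then have "inv u \<otimes> u \<in> I"
    using I_l_closed assms by blast
  then have "I = carrier R"
    using one_imp_carrier assms by simp
  with I_notcarr show False
    by simp
qed

lemma (in ring) Units_neg_closed: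
  assumes "u \<in> Units R"
  shows "\<ominus> u \<in> Units R"
proof -
  have "\<ominus> u = \<ominus> \<one> \<otimes> u"
    using Units_closed[OF assms] by (simp add: l_minus)
  then show ?thesis
    using Units_m_closed[OF Units_minus_one_closed assms] by simp
qed

lemma (in ring) ideal_restrict_subring:
  assumes I: "ideal I R" and S: "subring S R" and "I \<subseteq> S"
  shows "ideal I (R\<lparr>carrier := S\<rparr>)"
proof (rule idealI)
  show "ring (R\<lparr>carrier := S\<rparr>)"
    using subring_is_ring[OF S] .
  have "subgroup I ((add_monoid R)\<lparr>carrier := S\<rparr>)"
    using add.subgroup_incl[OF ideal.axioms(1)[OF I, unfolded additive_subgroup_def]
        subring.axioms(1)[OF S] \<open>I \<subseteq> S\<close>] .
  then show "subgroup I (add_monoid (R\<lparr>carrier := S\<rparr>))"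
    by simp
  fix a x assume "a \<in> I" and "x \<in> carrier (R\<lparr>carrier := S\<rparr>)"
  then have "x \<in> carrier R"
    using subringE(1)[OF S] by auto
  then show "x \<otimes>\<^bsub>R\<lparr>carrier := S\<rparr>\<^esub> a \<in> I" and "a \<otimes>\<^bsub>R\<lparr>carrier := S\<rparr>\<^esub> x \<in> I"
    using \<open>a \<in> I\<close> ideal.I_l_closed[OF I] ideal.I_r_closed[OF I] by simp_all
qed

lemma (in ring) eval_in_subring:
  assumes "subring K R" and "set p \<subseteq> K" and "x \<in> K"
  shows "eval p x \<in> K"
  using ring.eval_in_carrier[OF subring_is_ring[OF assms(1)], of p x] assms by simp

context cring
begin

section \<open>Maximal ideals and the Jacobson radical\<close>

lemma exists_maximalideal_superset:
  assumes "ideal I R" and "\<one> \<notin> I"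
  shows "\<exists>M. maximalideal M R \<and> I \<subseteq> M"
proof -
  define F where "F = {J. ideal J R \<and> I \<subseteq> J \<and> \<one> \<notin> J}"
  have "\<exists>M\<in>F. \<forall>J\<in>F. M \<subseteq> J \<longrightarrow> J = M"
  proof (rule subset_Zorn_nonempty)
    show "F \<noteq> {}"
      using assms unfolding F_def by blast
    fix C assume "C \<noteq> {}" and chain: "subset.chain F C"
    then have "subset.chain {J. ideal J R} C"
      unfolding F_def pred_on.chain_def by blast
    then have "ideal (\<Union>C) R"
      using chain_Union_is_ideal[of C] \<open>C \<noteq> {}\<close> by simp
    moreover have "I \<subseteq> \<Union>C" and "\<one> \<notin> \<Union>C"
      using \<open>C \<noteq> {}\<close> chain unfolding F_def pred_on.chain_def by blast+
    ultimately show "\<Union>C \<in> F"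
      unfolding F_def by blast
  qed
  then obtain M where M: "M \<in> F" and M_max: "\<And>J. J \<in> F \<Longrightarrow> M \<subseteq> J \<Longrightarrow> J = M"
    by blast
  have "maximalideal M R"
  proof (rule maximalidealI)
    show "ideal M R" and "carrier R \<noteq> M"
      using M one_closed unfolding F_def by blast+
    show "J = M \<or> J = carrier R" if "ideal J R" and "M \<subseteq> J" for J
    proof (cases "\<one> \<in> J")
      case True
      then show ?thesis
        using ideal.one_imp_carrier[OF \<open>ideal J R\<close>] by simp
    next
      case False
      with M that have "J \<in> F"
        unfolding F_def by auto
      with M_max \<open>M \<subseteq> J\<close> show ?thesis
        by simp
    qed
  qed
  with M show ?thesis
    unfolding F_def by blast
qed

lemma exists_maximalideal:
  assumes "\<one> \<noteq> \<zero>"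
  shows "\<exists>M. maximalideal M R"
  using exists_maximalideal_superset[OF zeroideal] assms by auto

lemma nonunit_in_maximalideal:
  assumes "x \<in> carrier R" and "x \<notin> Units R"
  shows "\<exists>M. maximalideal M R \<and> x \<in> M"
proof -
  have "\<one> \<notin> PIdl x"
  proof
    assume "\<one> \<in> PIdl x"
    then obtain r where r: "r \<in> carrier R" and "\<one> = r \<otimes> x"
      unfolding cgenideal_def by blast
    then have "r \<otimes> x = \<one>" and "x \<otimes> r = \<one>"
      using m_comm[OF assms(1) r] by simp_all
    with r assms(1) have "x \<in> Units R"
      unfolding Units_def by blast
    with assms(2) show False ..
  qed
  then obtain M where "maximalideal M R" and "PIdl x \<subseteq> M"
    using exists_maximalideal_superset[OF cgenideal_ideal[OF assms(1)]] by blast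
  then show ?thesis
    using cgenideal_self[OF assms(1)] by blast
qed

lemma exists_inverse_mod_maximalideal:
  assumes "maximalideal M R" and x: "x \<in> carrier R" and "x \<notin> M"
  shows "\<exists>r\<in>carrier R. x \<otimes> r \<ominus> \<one> \<in> M"
proof -
  interpret maximalideal M R by fact
  define J where "J = M <+>\<^bsub>R\<^esub> PIdl x"
  have J_elem: "m \<oplus> r \<otimes> x \<in> J" if "m \<in> M" and "r \<in> carrier R" for m r
    using that unfolding J_def set_add_def' cgenideal_def by blast
  have J_ideal: "ideal J R"
    unfolding J_def using add_ideals[OF is_ideal cgenideal_ideal[OF x]] .
  have "M \<subseteq> J"
    using J_elem[of _ \<zero>] x by (auto simp: Icarr)
  moreover have "x \<in> J"
    using J_elem[of \<zero> \<one>] x additive_subgroup.zero_closed[OF is_additive_subgroup] by simp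
  ultimately have "J = carrier R"
    using I_maximal[OF J_ideal] ideal.Icarr[OF J_ideal] \<open>x \<notin> M\<close> by blast
  then obtain m r where m: "m \<in> M" and r: "r \<in> carrier R" and one_eq: "\<one> = m \<oplus> r \<otimes> x"
    using one_closed unfolding J_def set_add_def' cgenideal_def by blast
  have "x \<otimes> r \<ominus> \<one> = \<ominus> m"
    using Icarr[OF m] r x unfolding one_eq by algebra
  then have "x \<otimes> r \<ominus> \<one> \<in> M"
    using additive_subgroup.a_inv_closed[OF is_additive_subgroup m] by simp
  with r show ?thesis ..
qed

lemma jacobson_subset_maximalideal: "maximalideal M R \<Longrightarrow> jacobson R \<subseteq> M"
  unfolding jacobson_def by blast

lemma jacobson_ideal:
  assumes "\<one> \<noteq> \<zero>"
  shows "ideal (jacobson R) R"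
proof -
  obtain M where M: "maximalideal M R"
    using exists_maximalideal[OF assms] by blast
  have "\<Inter>{M. maximalideal M R} \<subseteq> carrier R"
    using Inter_lower[of M] M
      additive_subgroup.a_subset[OF ideal.axioms(1)[OF maximalideal.axioms(1)[OF M]]] by auto
  then have "jacobson R = \<Inter>{M. maximalideal M R}"
    unfolding jacobson_def by (rule Int_absorb1)
  moreover have "ideal (\<Inter>{M. maximalideal M R}) R"
    using M by (intro i_Intersect) (auto dest: maximalideal.axioms(1))
  ultimately show ?thesis
    by simp
qed

lemma one_notin_jacobson:
  assumes "\<one> \<noteq> \<zero>"
  shows "\<one> \<notin> jacobson R"
proof
  assume "\<one> \<in> jacobson R"
  obtain M where "maximalideal M R"
    using exists_maximalideal[OF assms] by blast
  with \<open>\<one> \<in> jacobson R\<close> show False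
    using jacobson_subset_maximalideal maximalideal.I_notcarr
      ideal.one_imp_carrier[OF maximalideal.axioms(1)] by blast
qed

lemma jacobson_iff:
  "x \<in> jacobson R \<longleftrightarrow> x \<in> carrier R \<and> (\<forall>r\<in>carrier R. \<one> \<oplus> r \<otimes> x \<in> Units R)"
proof (intro iffI conjI ballI)
  assume x: "x \<in> jacobson R"
  then show "x \<in> carrier R"
    unfolding jacobson_def by blast
  fix r assume r: "r \<in> carrier R"
  show "\<one> \<oplus> r \<otimes> x \<in> Units R"
  proof (rule ccontr)
    assume "\<one> \<oplus> r \<otimes> x \<notin> Units R"
    moreover have "\<one> \<oplus> r \<otimes> x \<in> carrier R"
      using r \<open>x \<in> carrier R\<close> by simp
    ultimately obtain M where M: "maximalideal M R" and in_M: "\<one> \<oplus> r \<otimes> x \<in> M"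
      using nonunit_in_maximalideal by blast
    interpret maximalideal M R by fact
    have "r \<otimes> x \<in> M"
      using x M r jacobson_subset_maximalideal I_l_closed by blast
    then have "(\<one> \<oplus> r \<otimes> x) \<ominus> r \<otimes> x \<in> M"
      using in_M by (simp add: a_minus_def a_closed a_inv_closed)
    moreover have "(\<one> \<oplus> r \<otimes> x) \<ominus> r \<otimes> x = \<one>"
      using r \<open>x \<in> carrier R\<close> by algebra
    ultimately show False
      using one_imp_carrier I_notcarr by simp
  qed
next
  assume "x \<in> carrier R \<and> (\<forall>r\<in>carrier R. \<one> \<oplus> r \<otimes> x \<in> Units R)"
  then have x: "x \<in> carrier R" and units: "\<And>r. r \<in> carrier R \<Longrightarrow> \<one> \<oplus> r \<otimes> x \<in> Units R"
    by auto
  have "x \<in> M" if M: "maximalideal M R" for M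
  proof (rule ccontr)
    interpret maximalideal M R by fact
    assume "x \<notin> M"
    then obtain r where r: "r \<in> carrier R" and "x \<otimes> r \<ominus> \<one> \<in> M"
      using exists_inverse_mod_maximalideal[OF M x] by blast
    then have "\<ominus> (x \<otimes> r \<ominus> \<one>) \<in> M"
      by (simp add: a_inv_closed)
    moreover have "\<ominus> (x \<otimes> r \<ominus> \<one>) = \<one> \<oplus> (\<ominus> r) \<otimes> x"
      using r x by algebra
    moreover have "\<one> \<oplus> (\<ominus> r) \<otimes> x \<in> Units R"
      using r by (intro units) simp
    ultimately show False
      using Units_notin by metis
  qed
  with x show "x \<in> jacobson R"
    unfolding jacobson_def by blast
qed

lemma Units_add_jacobson:
  assumes u: "u \<in> Units R" and "j \<in> jacobson R"
  shows "u \<oplus> j \<in> Units R"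
proof -
  obtain v where v: "v \<in> carrier R" and uv: "u \<otimes> v = \<one>"
    using u unfolding Units_def by blast
  have j: "j \<in> carrier R" and unit: "\<one> \<oplus> v \<otimes> j \<in> Units R"
    using assms(2) v unfolding jacobson_iff by blast+
  have "u \<otimes> (\<one> \<oplus> v \<otimes> j) = u \<oplus> (u \<otimes> v) \<otimes> j"
    using Units_closed[OF u] v j by algebra
  then have "u \<oplus> j = u \<otimes> (\<one> \<oplus> v \<otimes> j)"
    using uv j by simp
  then show ?thesis
    using Units_m_closed[OF u unit] by simp
qed

section \<open>The sublocalization\<close>

lemma sublocalization_subset_one_closure: "sublocalization R \<subseteq> one_closure R (Units R)"
  unfolding one_closure_def
proof (rule Inter_greatest, safe)
  fix F x
  assume F: "additive_subgroup F R" and "\<one> \<in> F"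
    and cancel: "\<forall>t\<in>Units R. \<forall>a\<in>carrier R. t \<otimes> a \<in> F \<longrightarrow> a \<in> F"
    and x: "x \<in> sublocalization R"
  have Units_F: "u \<in> F" if u: "u \<in> Units R" for u
  proof -
    have "inv u \<otimes> u \<in> F"
      using Units_l_inv[OF u] \<open>\<one> \<in> F\<close> by simp
    then show "u \<in> F"
      using cancel Units_inv_Units[OF u] Units_closed[OF u] by blast
  qed
  show "x \<in> F"
  proof (cases "x \<in> Units R")
    case True
    then show ?thesis
      by (rule Units_F)
  next
    case False
    with x have "x \<in> jacobson R"
      unfolding sublocalization_def by blast
    then have xc: "x \<in> carrier R" and "\<one> \<oplus> \<one> \<otimes> x \<in> Units R"
      unfolding jacobson_iff by blast+
    then have "\<one> \<oplus> x \<in> F"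
      using Units_F by simp
    then have "(\<one> \<oplus> x) \<oplus> \<ominus> \<one> \<in> F"
      by (rule additive_subgroup.a_closed[OF F _ additive_subgroup.a_inv_closed[OF F \<open>\<one> \<in> F\<close>]])
    moreover have "(\<one> \<oplus> x) \<oplus> \<ominus> \<one> = x"
      using xc by algebra
    ultimately show ?thesis
      by simp
  qed
qed

context
  assumes sl: "sublocalizable R"
begin

lemma sublocalizable_one_neq_zero: "\<one> \<noteq> \<zero>"
  using sl unfolding sublocalizable_def by blast

lemma sublocalization_subset_carrier: "sublocalization R \<subseteq> carrier R"
  unfolding sublocalization_def jacobson_def by blast

lemma sublocalization_add_closed:
  assumes x: "x \<in> sublocalization R" and y: "y \<in> sublocalization R"
  shows "x \<oplus> y \<in> sublocalization R"
proof -
  interpret J: ideal "jacobson R" R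
    using jacobson_ideal[OF sublocalizable_one_neq_zero] .
  have "x \<oplus> y \<in> Units R \<union> jacobson R"
  proof (cases "x \<in> Units R"; cases "y \<in> Units R")
    assume "x \<in> Units R" and "y \<in> Units R"
    then show ?thesis
      using sl unfolding sublocalizable_def by blast
  next
    assume "x \<in> Units R" and "y \<notin> Units R"
    then show ?thesis
      using y Units_add_jacobson unfolding sublocalization_def by blast
  next
    assume "x \<notin> Units R" and "y \<in> Units R"
    then have "y \<oplus> x \<in> Units R"
      using x Units_add_jacobson unfolding sublocalization_def by blast
    moreover have "x \<in> carrier R" and "y \<in> carrier R"
      using x y sublocalization_subset_carrier by blast+
    ultimately show ?thesis
      by (simp add: a_comm)
  next
    assume "x \<notin> Units R" and "y \<notin> Units R"
    then show ?thesis
      using x y J.a_closed unfolding sublocalization_def by blast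
  qed
  then show ?thesis
    unfolding sublocalization_def .
qed

lemma sublocalization_subring: "subring (sublocalization R) R"
proof -
  interpret J: ideal "jacobson R" R
    using jacobson_ideal[OF sublocalizable_one_neq_zero] .
  show ?thesis
  proof (rule subringI[OF sublocalization_subset_carrier])
    show "\<one> \<in> sublocalization R"
      unfolding sublocalization_def by simp
    show "\<ominus> h \<in> sublocalization R" if "h \<in> sublocalization R" for h
      using that Units_neg_closed J.a_inv_closed unfolding sublocalization_def by blast
    show "h1 \<otimes> h2 \<in> sublocalization R"
      if "h1 \<in> sublocalization R" and "h2 \<in> sublocalization R" for h1 h2
      using that sublocalization_subset_carrier J.I_l_closed J.I_r_closed
      unfolding sublocalization_def by blast
    show "h1 \<oplus> h2 \<in> sublocalization R"
      if "h1 \<in> sublocalization R" and "h2 \<in> sublocalization R" for h1 h2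
      using sublocalization_add_closed[OF that] .
  qed
qed

lemma one_closure_Units_subset_sublocalization: "one_closure R (Units R) \<subseteq> sublocalization R"
  unfolding one_closure_def
proof (rule Inter_lower, safe)
  show "additive_subgroup (sublocalization R) R"
    using subring.axioms(1)[OF sublocalization_subring] by (simp add: additive_subgroup_def)
  show "\<one> \<in> sublocalization R"
    unfolding sublocalization_def by simp
  fix t a
  assume t: "t \<in> Units R" and a: "a \<in> carrier R" and ta: "t \<otimes> a \<in> sublocalization R"
  have "inv t \<in> sublocalization R"
    using t unfolding sublocalization_def by simp
  then have "inv t \<otimes> (t \<otimes> a) \<in> sublocalization R"
    using ta subringE(6)[OF sublocalization_subring] by blast
  moreover have "inv t \<otimes> (t \<otimes> a) = a"
    using t a by (simp add: m_assoc[symmetric] Units_closed)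
  ultimately show "a \<in> sublocalization R"
    by simp
qed

lemma one_closure_Units_eq_sublocalization: "one_closure R (Units R) = sublocalization R"
  using one_closure_Units_subset_sublocalization sublocalization_subset_one_closure by blast

lemma proper_ideal_sublocalization_subset_jacobson:
  assumes I: "ideal I (R\<lparr>carrier := sublocalization R\<rparr>)" and "\<one> \<notin> I"
  shows "I \<subseteq> jacobson R"
proof
  fix x assume "x \<in> I"
  then have "x \<in> sublocalization R"
    using ideal.Icarr[OF I] by simp
  show "x \<in> jacobson R"
  proof (rule ccontr)
    assume "x \<notin> jacobson R"
    with \<open>x \<in> sublocalization R\<close> have x: "x \<in> Units R"
      unfolding sublocalization_def by blast
    then have "inv x \<in> sublocalization R"
      unfolding sublocalization_def by simp
    then have "inv x \<otimes> x \<in> I"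
      using ideal.I_l_closed[OF I \<open>x \<in> I\<close>] by simp
    with x \<open>\<one> \<notin> I\<close> show False
      by simp
  qed
qed

lemma maximalideal_jacobson_sublocalization:
  "maximalideal (jacobson R) (R\<lparr>carrier := sublocalization R\<rparr>)"
proof (rule maximalidealI)
  show "ideal (jacobson R) (R\<lparr>carrier := sublocalization R\<rparr>)"
    using ideal_restrict_subring[OF jacobson_ideal[OF sublocalizable_one_neq_zero]
        sublocalization_subring]
    unfolding sublocalization_def by blast
  show "carrier (R\<lparr>carrier := sublocalization R\<rparr>) \<noteq> jacobson R"
    using one_notin_jacobson[OF sublocalizable_one_neq_zero]
    unfolding sublocalization_def by auto
  fix I assume I: "ideal I (R\<lparr>carrier := sublocalization R\<rparr>)" and "jacobson R \<subseteq> I"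
  show "I = jacobson R \<or> I = carrier (R\<lparr>carrier := sublocalization R\<rparr>)"
  proof (cases "\<one> \<in> I")
    case True
    then show ?thesis
      using ideal.one_imp_carrier[OF I] by simp
  next
    case False
    then show ?thesis
      using proper_ideal_sublocalization_subset_jacobson[OF I] \<open>jacobson R \<subseteq> I\<close> by blast
  qed
qed

lemma local_ring_sublocalization: "local_ring (R\<lparr>carrier := sublocalization R\<rparr>)"
  unfolding local_ring_def
proof (rule ex1I[of _ "jacobson R"])
  show "maximalideal (jacobson R) (R\<lparr>carrier := sublocalization R\<rparr>)"
    by (rule maximalideal_jacobson_sublocalization)
  fix M assume "maximalideal M (R\<lparr>carrier := sublocalization R\<rparr>)"
  then interpret M: maximalideal M "R\<lparr>carrier := sublocalization R\<rparr>" .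
  have "\<one> \<notin> M"
    using M.one_imp_carrier M.I_notcarr by auto
  then have "M \<subseteq> jacobson R"
    by (rule proper_ideal_sublocalization_subset_jacobson[OF M.is_ideal])
  moreover have "jacobson R \<subseteq> carrier (R\<lparr>carrier := sublocalization R\<rparr>)"
    unfolding sublocalization_def by auto
  ultimately have "jacobson R = M \<or> jacobson R = carrier (R\<lparr>carrier := sublocalization R\<rparr>)"
    using M.I_maximal[OF maximalideal.axioms(1)[OF maximalideal_jacobson_sublocalization]] by blast
  then show "M = jacobson R"
    using maximalideal.I_notcarr[OF maximalideal_jacobson_sublocalization] by auto
qed

end

section \<open>Integral extensions\<close>

lemma pow_minus_one_in_ideal:
  assumes I: "ideal I R" and y: "y \<in> carrier R" and "y \<ominus> \<one> \<in> I"
  shows "y [^] (n::nat) \<ominus> \<one> \<in> I"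
proof (induction n)
  case 0
  then show ?case
    using additive_subgroup.zero_closed[OF ideal.axioms(1)[OF I]] by (simp add: a_minus_def r_neg)
next
  case (Suc n)
  have "y [^] Suc n \<ominus> \<one> = y [^] n \<otimes> (y \<ominus> \<one>) \<oplus> (y [^] n \<ominus> \<one>)"
    using y nat_pow_closed[OF y, of n] by (simp, algebra)
  moreover have "y [^] n \<otimes> (y \<ominus> \<one>) \<in> I"
    using ideal.I_l_closed[OF I \<open>y \<ominus> \<one> \<in> I\<close>] y by simp
  ultimately show ?case
    using additive_subgroup.a_closed[OF ideal.axioms(1)[OF I] _ Suc.IH] by simp
qed

text \<open>Coefficient lists start with the leading coefficient: for \<open>q = [q\<^sub>0, \<dots>, q\<^bsub>n-1\<^esub>]\<close>,
  \<open>eval q c = \<Sum>\<^sub>i q\<^sub>i c\<^bsup>n-1-i\<^esup>\<close> while \<open>eval (rev q) a = \<Sum>\<^sub>i q\<^sub>i a\<^sup>i\<close>.\<close>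

lemma eval_rev_mod_ideal:
  assumes I: "ideal I R" and a: "a \<in> carrier R" and c: "c \<in> carrier R"
    and ac: "a \<otimes> c \<ominus> \<one> \<in> I" and q: "set q \<subseteq> carrier R"
  shows "a [^] length q \<otimes> eval q c \<ominus> a \<otimes> eval (rev q) a \<in> I"
  using q
proof (induction q)
  case Nil
  then show ?case
    using additive_subgroup.zero_closed[OF ideal.axioms(1)[OF I]] a by (simp add: a_minus_def)
next
  case (Cons x xs)
  define n where "n = length xs"
  define E where "E = eval xs c"
  define E' where "E' = eval (rev xs) a"
  have x: "x \<in> carrier R" and xs: "set xs \<subseteq> carrier R"
    using Cons.prems by auto
  have carr: "E \<in> carrier R" "E' \<in> carrier R" "a [^] n \<in> carrier R" "c [^] n \<in> carrier R"
    unfolding E_def E'_def using eval_in_carrier xs a c by auto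
  have "a [^] length (x # xs) \<otimes> eval (x # xs) c \<ominus> a \<otimes> eval (rev (x # xs)) a
      = a [^] n \<otimes> a \<otimes> (x \<otimes> c [^] n \<oplus> E) \<ominus> a \<otimes> (E' \<otimes> a \<oplus> x)"
    unfolding n_def E_def E'_def using eval_append_aux xs x a by simp
  also have "\<dots> = (x \<otimes> a) \<otimes> (a [^] n \<otimes> c [^] n \<ominus> \<one>) \<oplus> a \<otimes> (a [^] n \<otimes> E \<ominus> a \<otimes> E')"
    using carr x a by algebra
  finally have eq: "a [^] length (x # xs) \<otimes> eval (x # xs) c \<ominus> a \<otimes> eval (rev (x # xs)) a
      = (x \<otimes> a) \<otimes> ((a \<otimes> c) [^] n \<ominus> \<one>) \<oplus> a \<otimes> (a [^] n \<otimes> E \<ominus> a \<otimes> E')"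
    using nat_pow_distrib[OF a c] by simp
  have "(x \<otimes> a) \<otimes> ((a \<otimes> c) [^] n \<ominus> \<one>) \<in> I"
    using ideal.I_l_closed[OF I pow_minus_one_in_ideal[OF I _ ac]] x a c by simp
  moreover have "a \<otimes> (a [^] n \<otimes> E \<ominus> a \<otimes> E') \<in> I"
    using ideal.I_l_closed[OF I Cons.IH[OF xs] a] unfolding n_def E_def E'_def .
  ultimately show ?case
    unfolding eq by (rule additive_subgroup.a_closed[OF ideal.axioms(1)[OF I]])
qed

lemma inverse_mod_ideal_in_subring:
  assumes A: "subring A R" and I: "ideal I R" and a: "a \<in> A" and c: "c \<in> carrier R"
    and c_integral: "integral_over R A c" and ac: "a \<otimes> c \<ominus> \<one> \<in> I"
  shows "\<exists>a'\<in>A. \<one> \<oplus> a' \<otimes> a \<in> I"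
proof -
  obtain p where "p \<noteq> []" and p: "polynomial A p" and "hd p = \<one>" and root: "eval p c = \<zero>"
    using c_integral unfolding integral_over_def by blast
  then obtain xs where p_eq: "p = \<one> # xs"
    by (cases p) auto
  have xs: "set xs \<subseteq> A"
    using p unfolding p_eq polynomial_def by simp
  have carr: "set xs \<subseteq> carrier R" "a \<in> carrier R"
    using xs a subringE(1)[OF A] by auto
  define n where "n = length xs"
  define E where "E = eval xs c"
  define e where "e = eval (rev xs) a"
  have e: "e \<in> A"
    unfolding e_def using eval_in_subring[OF A _ a] xs by simp
  have carr': "E \<in> carrier R" "e \<in> carrier R" "a [^] n \<in> carrier R" "c [^] n \<in> carrier R"
    unfolding E_def using eval_in_carrier carr c e subringE(1)[OF A] by auto
  have "c [^] n \<oplus> E = \<zero>"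
    using root c unfolding p_eq n_def E_def by simp
  then have zero: "a [^] n \<otimes> c [^] n \<oplus> a [^] n \<otimes> E = \<zero>"
    using carr' by (metis r_distr r_null)
  have "\<one> \<oplus> e \<otimes> a
      = (a [^] n \<otimes> c [^] n \<oplus> a [^] n \<otimes> E) \<ominus> ((a [^] n \<otimes> c [^] n \<ominus> \<one>) \<oplus> (a [^] n \<otimes> E \<ominus> a \<otimes> e))"
    using carr carr' by algebra
  then have "\<one> \<oplus> e \<otimes> a = \<ominus> (((a \<otimes> c) [^] n \<ominus> \<one>) \<oplus> (a [^] n \<otimes> E \<ominus> a \<otimes> e))"
    using carr carr' nat_pow_distrib[OF carr(2) c] unfolding zero by (simp add: a_minus_def)
  moreover have "(a \<otimes> c) [^] n \<ominus> \<one> \<in> I"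
    using pow_minus_one_in_ideal[OF I _ ac] carr(2) c by simp
  moreover have "a [^] n \<otimes> E \<ominus> a \<otimes> e \<in> I"
    using eval_rev_mod_ideal[OF I carr(2) c ac carr(1)] unfolding n_def E_def e_def .
  ultimately have "\<one> \<oplus> e \<otimes> a \<in> I"
    using additive_subgroup.a_closed[OF ideal.axioms(1)[OF I]]
      additive_subgroup.a_inv_closed[OF ideal.axioms(1)[OF I]] by simp
  with e show ?thesis
    by blast
qed

lemma subring_cring:
  assumes "subring A R"
  shows "cring (R\<lparr>carrier := A\<rparr>)"
  using subcring_iff[OF subringE(1)[OF assms]] subcringI'[OF assms] by simp

lemma Units_subring_integral:
  assumes A: "subring A R" and integral: "\<forall>b\<in>carrier R. integral_over R A b"
  shows "Units (R\<lparr>carrier := A\<rparr>) = Units R \<inter> A"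
proof
  show "Units (R\<lparr>carrier := A\<rparr>) \<subseteq> Units R \<inter> A"
    using subringE(1)[OF A] unfolding Units_def by auto
  show "Units R \<inter> A \<subseteq> Units (R\<lparr>carrier := A\<rparr>)"
  proof
    fix a assume "a \<in> Units R \<inter> A"
    then have a: "a \<in> A" and a_unit: "a \<in> Units R"
      by auto
    have "a \<otimes> inv a \<ominus> \<one> \<in> {\<zero>}"
      using a_unit by (simp add: a_minus_def r_neg)
    then obtain a' where a': "a' \<in> A" and "\<one> \<oplus> a' \<otimes> a \<in> {\<zero>}"
      using inverse_mod_ideal_in_subring[OF A zeroideal a] integral Units_inv_closed[OF a_unit] by blast
    moreover have a_carr: "a \<in> carrier R" and "a' \<in> carrier R"
      using a a' subringE(1)[OF A] by auto
    ultimately have "(\<ominus> a') \<otimes> a = \<one>"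
      using sum_zero_eq_neg[of "\<one>" "a' \<otimes> a"] by (simp add: l_minus)
    moreover from this have "a \<otimes> (\<ominus> a') = \<one>"
      using m_comm[OF a_carr] \<open>a' \<in> carrier R\<close> by simp
    moreover have "\<ominus> a' \<in> A"
      using subringE(5)[OF A a'] .
    ultimately show "a \<in> Units (R\<lparr>carrier := A\<rparr>)"
      using a unfolding Units_def by auto
  qed
qed

lemma jacobson_subring_integral:
  assumes A: "subring A R" and integral: "\<forall>b\<in>carrier R. integral_over R A b"
  shows "jacobson (R\<lparr>carrier := A\<rparr>) = jacobson R \<inter> A"
proof -
  interpret A: cring "R\<lparr>carrier := A\<rparr>"
    using subring_cring[OF A] .
  have A_carr: "A \<subseteq> carrier R"
    using subringE(1)[OF A] .
  have Units_A: "Units (R\<lparr>carrier := A\<rparr>) = Units R \<inter> A"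
    using Units_subring_integral[OF A integral] .
  have A_jacobson_iff: "x \<in> jacobson (R\<lparr>carrier := A\<rparr>) \<longleftrightarrow>
      x \<in> A \<and> (\<forall>r\<in>A. \<one> \<oplus> r \<otimes> x \<in> Units R)" for x
  proof -
    have "\<one> \<oplus> r \<otimes> x \<in> A" if "x \<in> A" and "r \<in> A" for r
      using that subringE(3,6,7)[OF A] by simp
    then show ?thesis
      unfolding A.jacobson_iff Units_A by auto
  qed
  show ?thesis
  proof
    show "jacobson R \<inter> A \<subseteq> jacobson (R\<lparr>carrier := A\<rparr>)"
    proof
      fix x assume x: "x \<in> jacobson R \<inter> A"
      then have "x \<in> jacobson R"
        by blast
      then have "\<forall>r\<in>carrier R. \<one> \<oplus> r \<otimes> x \<in> Units R"
        unfolding jacobson_iff by blast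
      with x A_carr show "x \<in> jacobson (R\<lparr>carrier := A\<rparr>)"
        unfolding A_jacobson_iff by blast
    qed
    show "jacobson (R\<lparr>carrier := A\<rparr>) \<subseteq> jacobson R \<inter> A"
    proof
      fix x assume "x \<in> jacobson (R\<lparr>carrier := A\<rparr>)"
      then have x: "x \<in> A" and units: "\<And>r. r \<in> A \<Longrightarrow> \<one> \<oplus> r \<otimes> x \<in> Units R"
        unfolding A_jacobson_iff by auto
      have x_carr: "x \<in> carrier R"
        using x A_carr by blast
      have "x \<in> M" if M: "maximalideal M R" for M
      proof (rule ccontr)
        interpret maximalideal M R by fact
        assume "x \<notin> M"
        then obtain r where r: "r \<in> carrier R" and "x \<otimes> r \<ominus> \<one> \<in> M"
          using exists_inverse_mod_maximalideal[OF M x_carr] by blast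
        then obtain a' where "a' \<in> A" and "\<one> \<oplus> a' \<otimes> x \<in> M"
          using inverse_mod_ideal_in_subring[OF A is_ideal x r] integral r by blast
        with units show False
          using Units_notin by blast
      qed
      with x x_carr show "x \<in> jacobson R \<inter> A"
        unfolding jacobson_def by blast
    qed
  qed
qed

lemma sublocalizable_subring_integral:
  assumes A: "subring A R" and integral: "\<forall>b\<in>carrier R. integral_over R A b"
    and sl: "sublocalizable R"
  shows "sublocalizable (R\<lparr>carrier := A\<rparr>)"
  unfolding sublocalizable_def
proof (intro conjI ballI)
  show "\<one>\<^bsub>R\<lparr>carrier := A\<rparr>\<^esub> \<noteq> \<zero>\<^bsub>R\<lparr>carrier := A\<rparr>\<^esub>"
    using sublocalizable_one_neq_zero[OF sl] by simp
  fix u v assume "u \<in> Units (R\<lparr>carrier := A\<rparr>)" and "v \<in> Units (R\<lparr>carrier := A\<rparr>)"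
  then have u: "u \<in> Units R" "u \<in> A" and v: "v \<in> Units R" "v \<in> A"
    unfolding Units_subring_integral[OF A integral] by auto
  have "u \<oplus> v \<in> Units R \<union> jacobson R"
    using sl u(1) v(1) unfolding sublocalizable_def by blast
  moreover have "u \<oplus> v \<in> A"
    using subringE(7)[OF A u(2) v(2)] .
  ultimately show "u \<oplus>\<^bsub>R\<lparr>carrier := A\<rparr>\<^esub> v
      \<in> Units (R\<lparr>carrier := A\<rparr>) \<union> jacobson (R\<lparr>carrier := A\<rparr>)"
    unfolding Units_subring_integral[OF A integral] jacobson_subring_integral[OF A integral] by auto
qed

end

theorem corollary9p19:
  fixes B :: "('a, 'b) ring_scheme" and A :: "'a set"
  assumes "cring B"
    and "subring A B"
    and "\<forall>b \<in> carrier B. integral_over B A b"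
    and "sublocalizable B"
  shows "sublocalizable (B\<lparr>carrier := A\<rparr>)
    \<and> sublocalization (B\<lparr>carrier := A\<rparr>) = one_closure (B\<lparr>carrier := A\<rparr>) (Units (B\<lparr>carrier := A\<rparr>))
    \<and> one_closure (B\<lparr>carrier := A\<rparr>) (Units (B\<lparr>carrier := A\<rparr>)) = one_closure B (Units B) \<inter> A
    \<and> subring (sublocalization (B\<lparr>carrier := A\<rparr>)) (B\<lparr>carrier := A\<rparr>)
    \<and> local_ring (B\<lparr>carrier := sublocalization (B\<lparr>carrier := A\<rparr>)\<rparr>)
    \<and> maximalideal (jacobson (B\<lparr>carrier := A\<rparr>)) (B\<lparr>carrier := sublocalization (B\<lparr>carrier := A\<rparr>)\<rparr>)
    \<and> jacobson (B\<lparr>carrier := A\<rparr>) = jacobson B \<inter> A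
    \<and> Units (B\<lparr>carrier := A\<rparr>) = Units B \<inter> A"
proof -
  interpret cring B by fact
  let ?A = "B\<lparr>carrier := A\<rparr>"
  interpret A: cring ?A
    using subring_cring[OF assms(2)] .
  have units: "Units ?A = Units B \<inter> A"
    using Units_subring_integral[OF assms(2,3)] .
  have jacobson: "jacobson ?A = jacobson B \<inter> A"
    using jacobson_subring_integral[OF assms(2,3)] .
  have sl: "sublocalizable ?A"
    using sublocalizable_subring_integral[OF assms(2-4)] .
  have "sublocalization ?A = one_closure B (Units B) \<inter> A"
    unfolding one_closure_Units_eq_sublocalization[OF assms(4)] sublocalization_def units jacobson
    by blast
  then show ?thesis
    using sl units jacobson A.one_closure_Units_eq_sublocalization[OF sl] A.sublocalization_subring[OF sl]
      A.local_ring_sublocalization[OF sl] A.maximalideal_jacobson_sublocalization[OF sl]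
    by simp
qed

end
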